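(* Let $n$ be a positive integer, $c\ge2$ an integer, and $b_0\ge b_1\ge\dots\ge b_n\ge0$ as defined in the context. Let $$L'=b_0+\sum_{i=0}^{n-1} b_{\min\{i+c+1,n\}}2^i,\qquad U'=b_0+\sum_{i=0}^{n-1} b_{\max\{i+1-c,0\}}2^i.$$ Then $U'\le 2^{2c}L'$.
   Context: Given $w:\{0,1\}^n\to\mathbb{R}_{\ge0}$, fix an ordering $\sigma_1,\dots,\sigma_{2^n}$ of $\{0,1\}^n$ with $w(\sigma_j)\ge w(\sigma_{j+1})$ for $1\le j<2^n$, and set $b_i=w(\sigma_{2^i})$ for $i=0,\dots,n$. *)

theory Defs
  imports Complex_Main
begin

text \<open>Elements of {0,1}^n are represented as boolean lists of length n.
  An ordering sigma_1,...,sigma_{2^n} is a function sigma on {1..2^n} that is a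
  bijection onto {0,1}^n.  b_i = w(sigma_{2^i}).\<close>

definition bval :: "(bool list \<Rightarrow> real) \<Rightarrow> (nat \<Rightarrow> bool list) \<Rightarrow> nat \<Rightarrow> real" where
  "bval w \<sigma> i = w (\<sigma> (2 ^ i))"

end

theory Submission
  imports Defs
begin

text \<open>Let \<open>m = min (2c) n\<close>. Each of the first \<open>m\<close> summands of \<open>U'\<close> is at most \<open>b\<^sub>0 2\<^sup>i\<close>, so
  together with \<open>b\<^sub>0\<close> they contribute at most \<open>2\<^sup>m b\<^sub>0 \<le> 2\<^sup>2\<^sup>c b\<^sub>0\<close>. For \<open>i \<ge> 2c\<close> the summand
  \<open>b\<^bsub>i+1-c\<^esub> 2\<^sup>i\<close> equals \<open>2\<^sup>2\<^sup>c\<close> times the summand of \<open>L'\<close> with index \<open>i - 2c\<close>, because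
  \<open>(i - 2c) + c + 1 = i + 1 - c \<le> n\<close>.\<close>

lemma dyadic_sum_le_bound:
  fixes f :: "nat \<Rightarrow> real"
  assumes "\<And>i. i < m \<Longrightarrow> f i \<le> a"
  shows "a + (\<Sum>i<m. f i * 2 ^ i) \<le> 2 ^ m * a"
proof -
  have "(\<Sum>i<m. f i * 2 ^ i) \<le> (\<Sum>i<m. a * 2 ^ i)"
    using assms by (intro sum_mono mult_right_mono) auto
  also have "\<dots> = a * (2 ^ m - 1)"
  proof -
    have "(\<Sum>i<m. (2::real) ^ i) = 2 ^ m - 1"
      by (induction m) simp_all
    then show ?thesis by (simp add: sum_distrib_left[symmetric])
  qed
  finally show ?thesis by (simp add: algebra_simps)
qed

lemma shifted_dyadic_sums_le:
  fixes b :: "nat \<Rightarrow> real" and n c :: nat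
  assumes nonneg: "\<And>i. i \<le> n \<Longrightarrow> 0 \<le> b i"
    and antimono: "\<And>i j. i \<le> j \<Longrightarrow> j \<le> n \<Longrightarrow> b j \<le> b i"
  shows "b 0 + (\<Sum>i<n. b (i + 1 - c) * 2 ^ i)
         \<le> 2 ^ (2 * c) * (b 0 + (\<Sum>i<n. b (min (i + c + 1) n) * 2 ^ i))"
proof -
  define m where "m = min (2 * c) n"
  define L where "L i = b (min (i + c + 1) n) * (2::real) ^ i" for i
  have L_nonneg: "0 \<le> L i" for i
    unfolding L_def using nonneg by simp
  have split: "(\<Sum>i<n. b (i + 1 - c) * 2 ^ i)
      = (\<Sum>i<m. b (i + 1 - c) * 2 ^ i) + (\<Sum>i<n - m. b (i + m + 1 - c) * 2 ^ (i + m))"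
    using sum.atLeastLessThan_concat[of 0 m n "\<lambda>i. b (i + 1 - c) * (2::real) ^ i"]
      sum.shift_bounds_nat_ivl[of "\<lambda>i. b (i + 1 - c) * (2::real) ^ i" 0 m "n - m"]
    by (simp add: m_def atLeast0LessThan)
  have head: "b 0 + (\<Sum>i<m. b (i + 1 - c) * 2 ^ i) \<le> 2 ^ (2 * c) * b 0"
  proof -
    have "b 0 + (\<Sum>i<m. b (i + 1 - c) * 2 ^ i) \<le> 2 ^ m * b 0"
      by (rule dyadic_sum_le_bound) (use antimono in \<open>auto simp: m_def\<close>)
    also have "\<dots> \<le> 2 ^ (2 * c) * b 0"
      using nonneg[of 0] by (intro mult_right_mono power_increasing) (auto simp: m_def)
    finally show ?thesis .
  qed
  have tail: "(\<Sum>i<n - m. b (i + m + 1 - c) * 2 ^ (i + m)) \<le> 2 ^ (2 * c) * (\<Sum>i<n. L i)"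
  proof (cases "m = n")
    case True
    then show ?thesis using L_nonneg by (simp add: sum_nonneg)
  next
    case False
    then have m: "m = 2 * c" by (simp add: m_def)
    have "(\<Sum>i<n - m. b (i + m + 1 - c) * 2 ^ (i + m)) = (\<Sum>i<n - m. 2 ^ (2 * c) * L i)"
    proof (rule sum.cong)
      fix i assume "i \<in> {..<n - m}"
      then have "min (i + c + 1) n = i + m + 1 - c" using m by auto
      then show "b (i + m + 1 - c) * 2 ^ (i + m) = 2 ^ (2 * c) * L i"
        by (simp add: L_def m power_add)
    qed simp
    also have "\<dots> \<le> 2 ^ (2 * c) * (\<Sum>i<n. L i)"
      by (simp add: sum_distrib_left[symmetric] sum_mono2 L_nonneg)
    finally show ?thesis .
  qed
  show ?thesis
    using split head tail by (simp add: L_def algebra_simps)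
qed

context
  fixes n :: nat and w :: "bool list \<Rightarrow> real" and \<sigma> :: "nat \<Rightarrow> bool list"
  assumes bij: "bij_betw \<sigma> {1..2^n} {x. length x = n}"
    and sorted: "\<forall>j. 1 \<le> j \<and> j < 2^n \<longrightarrow> w (\<sigma> j) \<ge> w (\<sigma> (Suc j))"
begin

lemma bval_nonneg:
  assumes "\<forall>x. length x = n \<longrightarrow> w x \<ge> 0" and "i \<le> n"
  shows "0 \<le> bval w \<sigma> i"
proof -
  have "(2::nat) ^ i \<le> 2 ^ n"
    using \<open>i \<le> n\<close> by (simp add: power_increasing)
  then have "length (\<sigma> (2 ^ i)) = n"
    using bij_betw_apply[OF bij, of "2 ^ i"] by simp
  then show ?thesis
    using assms(1) by (simp add: bval_def)
qed

lemma bval_antimono: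
  assumes "i \<le> j" and "j \<le> n"
  shows "bval w \<sigma> j \<le> bval w \<sigma> i"
proof -
  have "(2::nat) ^ i \<le> 2 ^ j" and "(2::nat) ^ j \<le> 2 ^ n"
    using assms by (simp_all add: power_increasing)
  then have "{2 ^ i..<2 ^ j} \<subseteq> {1..<(2::nat) ^ n}"
    by auto
  then show ?thesis
    unfolding bval_def
    using lift_Suc_antimono_le_ivl[of "{1..<2 ^ n}" "\<lambda>j. w (\<sigma> j)"] sorted \<open>2 ^ i \<le> 2 ^ j\<close>
    by simp
qed

end

theorem lemma2:
  fixes n c :: nat and w :: "bool list \<Rightarrow> real" and \<sigma> :: "nat \<Rightarrow> bool list"
  assumes "n \<ge> 1" and "c \<ge> 2"
    and "\<forall>x. length x = n \<longrightarrow> w x \<ge> 0"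
    and "bij_betw \<sigma> {1..2^n} {x. length x = n}"
    and "\<forall>j. 1 \<le> j \<and> j < 2^n \<longrightarrow> w (\<sigma> j) \<ge> w (\<sigma> (Suc j))"
  shows "bval w \<sigma> 0 + (\<Sum>i<n. bval w \<sigma> (max (i + 1 - c) 0) * 2 ^ i)
         \<le> 2 ^ (2 * c) * (bval w \<sigma> 0 + (\<Sum>i<n. bval w \<sigma> (min (i + c + 1) n) * 2 ^ i))"
  using shifted_dyadic_sums_le[of n "bval w \<sigma>" c]
    bval_nonneg[OF assms(4,5,3)] bval_antimono[OF assms(4,5)]
  by simp

end
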